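(* For $F\in\mathbb F_{\Phi^*}$ define $\varphi(F,x)=\int_0^1\Phi^*(F^\leftarrow(u)+x)\,du-x$ for $x\in\mathbb R$. Then: 1) $\varphi(F,\cdot)$ is convex and its set of minimizers is a nonempty compact interval of $\mathbb R$; 2) the left and right derivatives of $\varphi(F,\cdot)$ satisfy, for every $x\in\mathbb R$, $\varphi(F,\cdot)'_-(x)=\int_0^1\Phi^{*\prime}_-(F^\leftarrow(u)+x)\,du-1$ and $\varphi(F,\cdot)'_+(x)=\int_0^1\Phi^{*\prime}_+(F^\leftarrow(u)+x)\,du-1$.
   Context: $\Phi:[0,\infty[\to[0,\infty]$ lower semicontinuous convex with $\Phi(0)<\infty$, $\Phi(x_0)<\infty$ for some $x_0>1$, $\inf_{x\ge0}\Phi(x)=0$, $\lim_{x\to\infty}\Phi(x)/x=\infty$; $\Phi^*(y)=\sup_{x\ge0}(xy-\Phi(x))$ is finite, convex, nondecreasing; $\Phi^{*\prime}_-,\Phi^{*\prime}_+$ denote its left and right derivatives. On an atomless probability space, $H^{\Phi^*}=\{X:\mathbb E[\Phi^*(c|X|)]<\infty\ \forall c>0\}$, and $\mathbb F_{\Phi^*}$ is the set of distribution functions of random variables in $H^{\Phi^*}$; $F^\leftarrow$ denotes the left-continuous quantile function of $F$. *)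

theory Defs
  imports "HOL-Probability.Probability"
begin

text \<open>Phi is modelled as a function real => ereal; only its values on [0,inf) matter.\<close>

definition Young_fun :: "(real \<Rightarrow> ereal) \<Rightarrow> bool" where
  "Young_fun \<Phi> \<longleftrightarrow>
     (\<forall>x\<ge>0. \<Phi> x \<ge> 0) \<and>
     \<comment> \<open>lower semicontinuous on [0,inf)\<close>
     (\<forall>x\<ge>0. \<forall>t<\<Phi> x. eventually (\<lambda>y. t < \<Phi> y) (at x within {0..})) \<and>
     \<comment> \<open>convex on [0,inf)\<close>
     (\<forall>x\<ge>0. \<forall>y\<ge>0. \<forall>t\<in>{0..1}.
        \<Phi> ((1 - t) * x + t * y) \<le> ereal (1 - t) * \<Phi> x + ereal t * \<Phi> y) \<and>
     \<Phi> 0 < \<infinity> \<and>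
     (\<exists>x0>1. \<Phi> x0 < \<infinity>) \<and>
     (INF x\<in>{0..}. \<Phi> x) = 0 \<and>
     ((\<lambda>x. \<Phi> x / ereal x) \<longlongrightarrow> \<infinity>) at_top"

text \<open>Convex conjugate Phi*(y) = sup_{x>=0} (x y - Phi x) (finite under Young_fun).\<close>
definition young_conj :: "(real \<Rightarrow> ereal) \<Rightarrow> real \<Rightarrow> real" where
  "young_conj \<Phi> y = real_of_ereal (SUP x\<in>{0..}. ereal (x * y) - \<Phi> x)"

definition lderiv :: "(real \<Rightarrow> real) \<Rightarrow> real \<Rightarrow> real" where
  "lderiv f x = Lim (at_left 0) (\<lambda>h. (f (x + h) - f x) / h)"

definition rderiv :: "(real \<Rightarrow> real) \<Rightarrow> real \<Rightarrow> real" where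
  "rderiv f x = Lim (at_right 0) (\<lambda>h. (f (x + h) - f x) / h)"

definition quantile :: "(real \<Rightarrow> real) \<Rightarrow> real \<Rightarrow> real" where
  "quantile F u = Inf {x. u \<le> F x}"

definition atomless :: "'a measure \<Rightarrow> bool" where
  "atomless M \<longleftrightarrow> (\<forall>A\<in>sets M. 0 < emeasure M A \<longrightarrow>
      (\<exists>B\<in>sets M. B \<subseteq> A \<and> 0 < emeasure M B \<and> emeasure M B < emeasure M A))"

definition orlicz_heart :: "(real \<Rightarrow> ereal) \<Rightarrow> 'a measure \<Rightarrow> ('a \<Rightarrow> real) \<Rightarrow> bool" where
  "orlicz_heart \<Phi> M X \<longleftrightarrow> X \<in> borel_measurable M \<and>
      (\<forall>c>0. integrable M (\<lambda>\<omega>. young_conj \<Phi> (c * \<bar>X \<omega>\<bar>)))"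

definition varphi :: "(real \<Rightarrow> ereal) \<Rightarrow> (real \<Rightarrow> real) \<Rightarrow> real \<Rightarrow> real" where
  "varphi \<Phi> F x = (LINT u:{0<..<1}|lborel. young_conj \<Phi> (quantile F u + x)) - x"

end

theory Submission
  imports Defs
begin

text \<open>
  Transport the problem to ((0,1), Lebesgue): the quantile function of F has law F there, so
  varphi(F, z) = E[Phi*(Y + z)] - z for a random variable Y in the Orlicz heart. Superlinearity
  and lower boundedness of Phi* (from Phi(x0) < oo with x0 > 1 and Phi(0) < oo) make this integrable
  for every z and coercive: it grows at least like (x0 - 1) z to the right and like -z to the left.
  Being convex and coercive, its minimizers form a nonempty compact interval. The difference
  quotients of the convex function Phi* are monotone in h, hence for |h| <= 1 dominated by the two
  unit-step quotients, and dominated convergence moves the one-sided limits inside the integral.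
\<close>

section \<open>The Young conjugate\<close>

lemma Young_fun_nonneg: "Young_fun \<Phi> \<Longrightarrow> x \<ge> 0 \<Longrightarrow> \<Phi> x \<ge> 0"
  by (simp add: Young_fun_def)

lemma Young_fun_finite_0:
  assumes "Young_fun \<Phi>"
  obtains p where "\<Phi> 0 = ereal p"
  using assms Young_fun_nonneg[OF assms, of 0] by (cases "\<Phi> 0") (auto simp: Young_fun_def)

lemma Young_fun_conj_bounded:
  assumes Y: "Young_fun \<Phi>"
  shows "\<exists>c. \<forall>x\<ge>0. ereal (x * y) - \<Phi> x \<le> ereal c"
proof -
  have lim: "((\<lambda>x. \<Phi> x / ereal x) \<longlongrightarrow> \<infinity>) at_top" using Y by (simp add: Young_fun_def)
  from order_tendstoD(1)[OF lim, of "ereal (\<bar>y\<bar> + 1)"]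
  obtain N where N: "\<And>x. x \<ge> N \<Longrightarrow> ereal (\<bar>y\<bar> + 1) < \<Phi> x / ereal x"
    by (auto simp: eventually_at_top_linorder)
  define N' where "N' = max N 1"
  have "ereal (x * y) - \<Phi> x \<le> ereal (N' * \<bar>y\<bar>)" if x: "x \<ge> 0" for x
  proof (cases "\<Phi> x")
    case (real p)
    show ?thesis
    proof (cases "x \<ge> N'")
      case True
      then have "x > 0" "x \<ge> N" by (auto simp: N'_def)
      then have "(\<bar>y\<bar> + 1) * x < p" using N[of x] real by (simp add: field_simps)
      moreover have "x * y \<le> \<bar>y\<bar> * x" by (metis abs_ge_self mult.commute mult_right_mono x)
      moreover have "(\<bar>y\<bar> + 1) * x = \<bar>y\<bar> * x + x" by (simp add: distrib_right)
      moreover have "0 \<le> N' * \<bar>y\<bar>" by (simp add: N'_def)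
      ultimately have "x * y - p \<le> N' * \<bar>y\<bar>" using \<open>x > 0\<close> by argo
      then show ?thesis using real by simp
    next
      case False
      have "x * y \<le> x * \<bar>y\<bar>" using x by (simp add: mult_left_mono)
      also have "\<dots> \<le> N' * \<bar>y\<bar>" using False x by (intro mult_right_mono) auto
      finally show ?thesis using real Young_fun_nonneg[OF Y x] by simp
    qed
  qed (use Young_fun_nonneg[OF Y x] in auto)
  then show ?thesis by blast
qed

lemma young_conj_eq_SUP:
  assumes Y: "Young_fun \<Phi>"
  shows "ereal (young_conj \<Phi> y) = (SUP x\<in>{0..}. ereal (x * y) - \<Phi> x)"
proof -
  obtain c where "\<forall>x\<ge>0. ereal (x * y) - \<Phi> x \<le> ereal c" using Young_fun_conj_bounded[OF Y] by blast
  then have "(SUP x\<in>{0..}. ereal (x * y) - \<Phi> x) \<le> ereal c" by (auto intro!: SUP_least)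
  moreover have "ereal (0 * y) - \<Phi> 0 \<le> (SUP x\<in>{0..}. ereal (x * y) - \<Phi> x)"
    by (rule SUP_upper) auto
  moreover obtain p where "\<Phi> 0 = ereal p" using Young_fun_finite_0[OF Y] .
  ultimately have "\<bar>SUP x\<in>{0..}. ereal (x * y) - \<Phi> x\<bar> \<noteq> \<infinity>" by auto
  then show ?thesis unfolding young_conj_def by (rule ereal_real')
qed

lemma young_conj_ge:
  assumes Y: "Young_fun \<Phi>" and "x \<ge> 0" and "\<Phi> x = ereal p"
  shows "x * y - p \<le> young_conj \<Phi> y"
proof -
  have "ereal (x * y) - \<Phi> x \<le> (SUP x\<in>{0..}. ereal (x * y) - \<Phi> x)"
    by (rule SUP_upper) (use assms in auto)
  then have "ereal (x * y - p) \<le> ereal (young_conj \<Phi> y)"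
    using assms young_conj_eq_SUP[OF Y, of y] by simp
  then show ?thesis by simp
qed

lemma young_conj_le:
  assumes Y: "Young_fun \<Phi>" and c: "\<And>x p. x \<ge> 0 \<Longrightarrow> \<Phi> x = ereal p \<Longrightarrow> x * y - p \<le> c"
  shows "young_conj \<Phi> y \<le> c"
proof -
  have "ereal (x * y) - \<Phi> x \<le> ereal c" if "x \<ge> 0" for x
    using c[OF that] Young_fun_nonneg[OF Y that] by (cases "\<Phi> x") auto
  then have "(SUP x\<in>{0..}. ereal (x * y) - \<Phi> x) \<le> ereal c" by (auto intro!: SUP_least)
  then show ?thesis using young_conj_eq_SUP[OF Y, of y] by (metis ereal_less_eq(3))
qed

lemma mono_young_conj:
  assumes Y: "Young_fun \<Phi>"
  shows "mono (young_conj \<Phi>)"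
proof (intro monoI young_conj_le[OF Y])
  fix y y' x p :: real assume "y \<le> y'" "x \<ge> 0" "\<Phi> x = ereal p"
  then show "x * y - p \<le> young_conj \<Phi> y'"
    using young_conj_ge[OF Y, of x p y'] mult_left_mono[of y y' x] by simp
qed

lemma convex_on_young_conj:
  assumes Y: "Young_fun \<Phi>"
  shows "convex_on UNIV (young_conj \<Phi>)"
proof (rule convex_onI)
  fix t a b :: real assume t: "0 < t" "t < 1"
  show "young_conj \<Phi> ((1 - t) *\<^sub>R a + t *\<^sub>R b) \<le> (1 - t) * young_conj \<Phi> a + t * young_conj \<Phi> b"
  proof (rule young_conj_le[OF Y])
    fix x p assume x: "x \<ge> 0" and p: "\<Phi> x = ereal p"
    have "x * ((1 - t) *\<^sub>R a + t *\<^sub>R b) - p = (1 - t) * (x * a - p) + t * (x * b - p)"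
      by (simp add: algebra_simps)
    also have "\<dots> \<le> (1 - t) * young_conj \<Phi> a + t * young_conj \<Phi> b"
      using young_conj_ge[OF Y x p, of a] young_conj_ge[OF Y x p, of b] t
      by (intro add_mono mult_left_mono) auto
    finally show "x * ((1 - t) *\<^sub>R a + t *\<^sub>R b) - p \<le> \<dots>" .
  qed
qed simp

lemma borel_measurable_young_conj [measurable]:
  "Young_fun \<Phi> \<Longrightarrow> young_conj \<Phi> \<in> borel_measurable borel"
  by (intro borel_measurable_continuous_onI convex_on_continuous convex_on_young_conj) auto

lemma young_conj_bounded_below:
  assumes Y: "Young_fun \<Phi>"
  shows "\<exists>c. \<forall>y. c \<le> young_conj \<Phi> y"
proof -
  obtain p where "\<Phi> 0 = ereal p" using Young_fun_finite_0[OF Y] .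
  then show ?thesis using young_conj_ge[OF Y, of 0 p] by auto
qed

lemma young_conj_superlinear:
  assumes Y: "Young_fun \<Phi>"
  shows "\<exists>a>1. \<exists>b. \<forall>y. a * y - b \<le> young_conj \<Phi> y"
proof -
  obtain a where a: "a > 1" "\<Phi> a < \<infinity>" using Y by (auto simp: Young_fun_def)
  then obtain b where "\<Phi> a = ereal b"
    using Young_fun_nonneg[OF Y, of a] by (cases "\<Phi> a") auto
  then show ?thesis using young_conj_ge[OF Y, of a b] a(1) by auto
qed

section \<open>Convex functions of a real variable\<close>

lemma convex_on_slope_mono:
  fixes f :: "real \<Rightarrow> real"
  assumes f: "convex_on UNIV f" and h: "h1 \<le> h2" "h1 \<noteq> 0" "h2 \<noteq> 0"
  shows "(f (y + h1) - f y) / h1 \<le> (f (y + h2) - f y) / h2"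
proof -
  have flip: "(f y - f (y + h)) / (y - (y + h)) = (f (y + h) - f y) / h" if "h \<noteq> 0" for h
    using that by (simp add: field_simps)
  consider "h1 = h2" | "0 < h1" "h1 < h2" | "h1 < h2" "h2 < 0" | "h1 < 0" "0 < h2"
    using h by linarith
  then show ?thesis
  proof cases
    case 2
    then show ?thesis
      using convex_on_slope_le(1)[OF f, of y "y + h2" "y + h1"] by (simp add: field_simps)
  next
    case 3
    then show ?thesis
      using convex_on_slope_le(2)[OF f, of "y + h1" y "y + h2"] by simp
  next
    case 4
    have "(f (y + h1) - f y) / h1 \<le> (f (y + h1) - f (y + h2)) / ((y + h1) - (y + h2))"
      using convex_on_slope_le(1)[OF f, of "y + h1" "y + h2" y] 4 by simp
    also have "\<dots> \<le> (f y - f (y + h2)) / (y - (y + h2))"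
      using convex_on_slope_le(2)[OF f, of "y + h1" "y + h2" y] 4 by simp
    finally show ?thesis using flip h by simp
  qed simp
qed

lemma convex_on_rderiv_tendsto:
  fixes f :: "real \<Rightarrow> real"
  assumes f: "convex_on UNIV f"
  shows "((\<lambda>h. (f (y + h) - f y) / h) \<longlongrightarrow> rderiv f y) (at_right 0)"
proof -
  let ?Q = "\<lambda>h. (f (y + h) - f y) / h"
  have "(?Q \<longlongrightarrow> Inf (?Q ` ({0<..} \<inter> UNIV))) (at 0 within ({0<..} \<inter> UNIV))"
  proof (rule Lim_right_bound)
    show "?Q a \<le> ?Q b" if "0 < a" "a \<le> b" for a b
      using convex_on_slope_mono[OF f, of a b] that by simp
    show "?Q (-1) \<le> ?Q a" if "0 < a" for a
      using convex_on_slope_mono[OF f, of "-1" a] that by simp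
  qed
  then have lim: "(?Q \<longlongrightarrow> Inf (?Q ` {0<..})) (at_right 0)" by simp
  then have "rderiv f y = Inf (?Q ` {0<..})"
    unfolding rderiv_def by (intro tendsto_Lim) auto
  with lim show ?thesis by simp
qed

lemma convex_on_lderiv_tendsto:
  fixes f :: "real \<Rightarrow> real"
  assumes f: "convex_on UNIV f"
  shows "((\<lambda>h. (f (y + h) - f y) / h) \<longlongrightarrow> lderiv f y) (at_left 0)"
proof -
  let ?Q = "\<lambda>h. (f (y + h) - f y) / h"
  have "(?Q \<longlongrightarrow> Sup (?Q ` ({..<0} \<inter> UNIV))) (at 0 within ({..<0} \<inter> UNIV))"
  proof (rule Lim_left_bound)
    show "?Q a \<le> ?Q b" if "b < 0" "a \<le> b" for a b
      using convex_on_slope_mono[OF f, of a b] that by simp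
    show "?Q b \<le> ?Q 1" if "b < 0" for b
      using convex_on_slope_mono[OF f, of b 1] that by simp
  qed
  then have lim: "(?Q \<longlongrightarrow> Sup (?Q ` {..<0})) (at_left 0)" by simp
  then have "lderiv f y = Sup (?Q ` {..<0})"
    unfolding lderiv_def by (intro tendsto_Lim) auto
  with lim show ?thesis by simp
qed

lemma convex_on_slope_bound:
  fixes f :: "real \<Rightarrow> real"
  assumes f: "convex_on UNIV f" and h: "h \<noteq> 0" "\<bar>h\<bar> \<le> 1"
  shows "\<bar>(f (y + h) - f y) / h\<bar> \<le> \<bar>f (y + 1) - f y\<bar> + \<bar>f y - f (y - 1)\<bar>"
proof -
  have "(f (y + h) - f y) / h \<le> f (y + 1) - f y"
    using convex_on_slope_mono[OF f, of h 1 y] h by simp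
  moreover have "f y - f (y - 1) \<le> (f (y + h) - f y) / h"
    using convex_on_slope_mono[OF f, of "-1" h y] h by simp
  ultimately show ?thesis by linarith
qed

lemma convex_on_convex_minimizers:
  fixes f :: "'a::real_vector \<Rightarrow> real"
  assumes f: "convex_on UNIV f"
  shows "convex {x. \<forall>y. f x \<le> f y}"
proof (rule convexI)
  fix x y :: 'a and u v :: real
  assume xy: "x \<in> {x. \<forall>y. f x \<le> f y}" "y \<in> {x. \<forall>y. f x \<le> f y}"
    and uv: "0 \<le> u" "0 \<le> v" "u + v = 1"
  have "f (u *\<^sub>R x + v *\<^sub>R y) \<le> f z" for z
  proof -
    have "u = 1 - v" using uv(3) by simp
    then have "f (u *\<^sub>R x + v *\<^sub>R y) \<le> u * f x + v * f y"
      using convex_onD[OF f, of v x y] uv(1,2) by simp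
    also have "\<dots> \<le> u * f z + v * f z"
      using xy uv by (intro add_mono mult_left_mono) auto
    finally show ?thesis using uv by (simp add: distrib_right[symmetric])
  qed
  then show "u *\<^sub>R x + v *\<^sub>R y \<in> {x. \<forall>y. f x \<le> f y}" by simp
qed

lemma convex_on_minimizers_Icc:
  fixes f :: "real \<Rightarrow> real"
  assumes f: "convex_on UNIV f" and coercive: "filterlim f at_top at_infinity"
  shows "\<exists>a b. a \<le> b \<and> {x. \<forall>y. f x \<le> f y} = {a..b}"
proof -
  have cont: "continuous_on UNIV f" by (rule convex_on_continuous[OF open_UNIV f])
  obtain R where R: "\<And>x. R \<le> \<bar>x\<bar> \<Longrightarrow> f 0 < f x"
    using coercive[unfolded filterlim_at_top_dense, rule_format, of "f 0"]
    by (auto simp: eventually_at_infinity)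
  obtain m where m: "m \<in> {-\<bar>R\<bar>..\<bar>R\<bar>}" "\<And>y. y \<in> {-\<bar>R\<bar>..\<bar>R\<bar>} \<Longrightarrow> f m \<le> f y"
    using continuous_attains_inf[of "{-\<bar>R\<bar>..\<bar>R\<bar>}" f] continuous_on_subset[OF cont] by auto
  have m_min: "f m \<le> f y" for y
  proof (cases "\<bar>y\<bar> \<le> \<bar>R\<bar>")
    case True
    then show ?thesis using m(2) by (simp add: abs_le_iff)
  next
    case False
    then have "f 0 < f y" using R abs_ge_self[of R] by simp
    moreover have "f m \<le> f 0" using m(2) by simp
    ultimately show ?thesis by simp
  qed
  define S where "S = {x. \<forall>y. f x \<le> f y}"
  have S_eq: "S = {x. f x \<le> f m}"
    using m_min unfolding S_def by (auto intro: order_trans)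
  have "closed S"
    unfolding S_eq by (rule closed_Collect_le[OF cont continuous_on_const])
  moreover have "S \<subseteq> {-\<bar>R\<bar>..\<bar>R\<bar>}"
  proof
    fix x assume "x \<in> S"
    then have "\<not> f 0 < f x" using m_min[of 0] by (simp add: S_eq)
    then have "\<bar>x\<bar> < R" using R not_le by blast
    then show "x \<in> {-\<bar>R\<bar>..\<bar>R\<bar>}" by auto
  qed
  ultimately have "compact S"
    by (metis compact_eq_bounded_closed bounded_closed_interval bounded_subset)
  moreover have "convex S"
    unfolding S_def by (rule convex_on_convex_minimizers[OF f])
  ultimately obtain a b where "S = {a..b}"
    using convex_connected connected_compact_interval_1 by metis
  moreover have "m \<in> S" by (simp add: S_eq)
  ultimately show ?thesis unfolding S_def by auto
qed

section \<open>Integrals of shifted convex functions\<close>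

lemma integral_dominated_convergence_at_right_0:
  fixes s :: "real \<Rightarrow> 'a \<Rightarrow> real" and f w :: "'a \<Rightarrow> real"
  assumes s: "\<And>t. s t \<in> borel_measurable M" and w: "integrable M w"
    and lim: "\<And>x. x \<in> space M \<Longrightarrow> ((\<lambda>t. s t x) \<longlongrightarrow> f x) (at_right 0)"
    and bound: "\<forall>\<^sub>F t in at_right 0. AE x in M. norm (s t x) \<le> w x"
  shows "((\<lambda>t. integral\<^sup>L M (s t)) \<longlongrightarrow> integral\<^sup>L M f) (at_right 0)"
proof -
  have seq: "filterlim (\<lambda>n. inverse (real n)) (at_right 0) sequentially"
    by (rule filterlim_compose[OF filterlim_inverse_at_right_top filterlim_real_sequentially])
  have "f \<in> borel_measurable M"
    by (rule borel_measurable_LIMSEQ_real[where u="\<lambda>n. s (inverse (real n))"])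
       (use s filterlim_compose[OF lim seq] in auto)
  then have "((\<lambda>t. integral\<^sup>L M (s (inverse t))) \<longlongrightarrow> integral\<^sup>L M f) at_top"
    using s w lim bound
    by (intro integral_dominated_convergence_at_top[where w=w])
       (auto simp: filterlim_at_right_to_top eventually_at_right_to_top)
  then show ?thesis by (simp add: filterlim_at_right_to_top)
qed

lemma convex_on_integral_shift:
  fixes g :: "real \<Rightarrow> real" and f :: "'a \<Rightarrow> real"
  assumes g: "convex_on UNIV g" and int: "\<And>z. integrable M (\<lambda>u. g (f u + z))"
  shows "convex_on UNIV (\<lambda>z. \<integral>u. g (f u + z) \<partial>M)"
proof (rule convex_onI)
  fix t a b :: real assume t: "0 < t" "t < 1"
  have "(\<integral>u. g (f u + ((1 - t) *\<^sub>R a + t *\<^sub>R b)) \<partial>M)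
      = (\<integral>u. g ((1 - t) *\<^sub>R (f u + a) + t *\<^sub>R (f u + b)) \<partial>M)"
    by (rule Bochner_Integration.integral_cong) (auto simp: algebra_simps)
  also have "\<dots> \<le> (\<integral>u. (1 - t) * g (f u + a) + t * g (f u + b) \<partial>M)"
    using t int[of a] int[of b] int[of "(1 - t) *\<^sub>R a + t *\<^sub>R b"]
    by (intro integral_mono integrable_add integrable_mult_right convex_onD[OF g])
       (auto simp: algebra_simps)
  also have "\<dots> = (1 - t) * (\<integral>u. g (f u + a) \<partial>M) + t * (\<integral>u. g (f u + b) \<partial>M)"
    using int[of a] int[of b] by simp
  finally show "(\<integral>u. g (f u + ((1 - t) *\<^sub>R a + t *\<^sub>R b)) \<partial>M)
      \<le> (1 - t) * (\<integral>u. g (f u + a) \<partial>M) + t * (\<integral>u. g (f u + b) \<partial>M)" .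
qed simp

lemma tendsto_integral_shift_slopes:
  fixes g :: "real \<Rightarrow> real" and f :: "'a \<Rightarrow> real"
  assumes g: "convex_on UNIV g" and [measurable]: "f \<in> borel_measurable M"
    and int: "\<And>z. integrable M (\<lambda>u. g (f u + z))"
  defines "G \<equiv> \<lambda>z. \<integral>u. g (f u + z) \<partial>M"
  shows "((\<lambda>h. (G (x + h) - G x) / h) \<longlongrightarrow> (\<integral>u. rderiv g (f u + x) \<partial>M)) (at_right 0)"
    and "((\<lambda>h. (G (x + h) - G x) / h) \<longlongrightarrow> (\<integral>u. lderiv g (f u + x) \<partial>M)) (at_left 0)"
proof -
  let ?s = "\<lambda>h u. (g (f u + x + h) - g (f u + x)) / h"
  let ?w = "\<lambda>u. \<bar>g (f u + x + 1) - g (f u + x)\<bar> + \<bar>g (f u + x) - g (f u + x - 1)\<bar>"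
  have [measurable]: "g \<in> borel_measurable borel"
    by (intro borel_measurable_continuous_onI convex_on_continuous[OF open_UNIV g])
  have int_shift: "integrable M (\<lambda>u. g (f u + x + c))" for c
    using int[of "x + c"] by (simp add: add.assoc)
  have quot: "(\<lambda>h. (G (x + h) - G x) / h) = (\<lambda>h. \<integral>u. ?s h u \<partial>M)"
  proof (rule ext)
    fix h
    have "(G (x + h) - G x) / h = (\<integral>u. g (f u + (x + h)) - g (f u + x) \<partial>M) / h"
      using int[of "x + h"] int[of x] by (simp add: G_def)
    then show "(G (x + h) - G x) / h = (\<integral>u. ?s h u \<partial>M)" by (simp add: add.assoc)
  qed
  have w: "integrable M ?w"
    using int_shift[of 1] int_shift[of 0] int_shift[of "-1"] by auto
  have slope_le: "norm (?s h u) \<le> ?w u" if "h \<noteq> 0" "\<bar>h\<bar> \<le> 1" for h u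
    using convex_on_slope_bound[OF g that, of "f u + x"] by (simp only: real_norm_def)
  have bound: "\<forall>\<^sub>F h in at 0. AE u in M. norm (?s h u) \<le> ?w u"
    unfolding eventually_at by (intro exI[of _ 1] conjI ballI impI AE_I2 slope_le) auto
  show "((\<lambda>h. (G (x + h) - G x) / h) \<longlongrightarrow> (\<integral>u. rderiv g (f u + x) \<partial>M)) (at_right 0)"
    unfolding quot
    using bound convex_on_rderiv_tendsto[OF g]
    by (intro integral_dominated_convergence_at_right_0[OF _ w]) (auto simp: eventually_at_split)
  have "((\<lambda>h. \<integral>u. ?s (- h) u \<partial>M) \<longlongrightarrow> (\<integral>u. lderiv g (f u + x) \<partial>M)) (at_right 0)"
    using bound convex_on_lderiv_tendsto[OF g]
    by (intro integral_dominated_convergence_at_right_0[OF _ w])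
       (auto simp: eventually_at_split eventually_at_left_to_right filterlim_at_left_to_right[where a=0])
  then show "((\<lambda>h. (G (x + h) - G x) / h) \<longlongrightarrow> (\<integral>u. lderiv g (f u + x) \<partial>M)) (at_left 0)"
    unfolding quot by (simp add: filterlim_at_left_to_right[where a=0])
qed

section \<open>The quantile transform\<close>

abbreviation lborel_01 :: "real measure" where
  "lborel_01 \<equiv> restrict_space lborel {0<..<1}"

lemma prob_space_lborel_01: "prob_space lborel_01"
  by (rule prob_space_restrict_space) auto

lemma set_integral_eq_lborel_01:
  fixes f :: "real \<Rightarrow> real"
  shows "(LINT u:{0<..<1}|lborel. f u) = (\<integral>u. f u \<partial>lborel_01)"
  unfolding set_lebesgue_integral_def by (rule integral_restrict_space[symmetric]) auto

context real_distribution
begin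

lemma quantile_le_iff:
  assumes u: "0 < u" "u < 1"
  shows "quantile (cdf M) u \<le> x \<longleftrightarrow> u \<le> cdf M x"
proof -
  define S where "S = {x. u \<le> cdf M x}"
  have q: "quantile (cdf M) u = Inf S" by (simp add: quantile_def S_def)
  obtain x1 where "u < cdf M x1"
    using order_tendstoD(1)[OF cdf_lim_at_top_prob u(2)] by (auto simp: eventually_at_top_linorder)
  then have ne: "S \<noteq> {}" unfolding S_def by (auto intro: less_imp_le)
  obtain L where L: "\<And>x. x \<le> L \<Longrightarrow> cdf M x < u"
    using order_tendstoD(2)[OF cdf_lim_at_bot u(1)] by (auto simp: eventually_at_bot_linorder)
  have bdd: "bdd_below S"
  proof (rule bdd_belowI)
    fix s assume "s \<in> S"
    then have "\<not> cdf M s < u" by (simp add: S_def)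
    then show "L \<le> s" by (meson L le_cases)
  qed
  have "u \<le> cdf M (Inf S)"
  proof (rule tendsto_lowerbound)
    show "(cdf M \<longlongrightarrow> cdf M (Inf S)) (at_right (Inf S))"
      using cdf_is_right_cont[of "Inf S"] by (simp add: continuous_within)
    show "\<forall>\<^sub>F t in at_right (Inf S). u \<le> cdf M t"
      using eventually_at_right_less[of "Inf S"]
    proof (rule eventually_mono)
      fix t assume "Inf S < t"
      then obtain s where "s \<in> S" "s < t" using cInf_less_iff[OF ne bdd] by auto
      then show "u \<le> cdf M t" using cdf_nondecreasing[of s t] by (simp add: S_def)
    qed
  qed simp
  then show ?thesis
    using cdf_nondecreasing[of "Inf S" x] cInf_lower[OF _ bdd, of x] by (auto simp: q S_def)
qed

lemma mono_on_quantile: "mono_on {0<..<1} (quantile (cdf M))"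
proof (rule mono_onI)
  fix u v :: real assume uv: "u \<in> {0<..<1}" "v \<in> {0<..<1}" "u \<le> v"
  then show "quantile (cdf M) u \<le> quantile (cdf M) v"
    using quantile_le_iff[of v "quantile (cdf M) v"] quantile_le_iff[of u] by auto
qed

lemma borel_measurable_quantile [measurable]: "quantile (cdf M) \<in> borel_measurable lborel_01"
proof -
  have "quantile (cdf M) \<in> borel_measurable (restrict_space borel {0<..<1})"
    by (rule borel_measurable_mono_on_fnc[OF mono_on_quantile])
  then show ?thesis
    by (subst measurable_cong_sets[OF sets_restrict_space_cong[OF sets_lborel] refl])
qed

lemma distr_quantile_lborel_01: "distr lborel_01 borel (quantile (cdf M)) = M"
proof (rule cdf_unique)
  show "real_distribution (distr lborel_01 borel (quantile (cdf M)))"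
    using prob_space_lborel_01 by (intro prob_space.real_distribution_distr) auto
  show "cdf (distr lborel_01 borel (quantile (cdf M))) = cdf M"
  proof
    fix x
    have "cdf (distr lborel_01 borel (quantile (cdf M))) x
        = measure lborel_01 (quantile (cdf M) -` {..x} \<inter> space lborel_01)"
      unfolding cdf_def[of "distr lborel_01 borel (quantile (cdf M))"] by (rule measure_distr) auto
    also have "quantile (cdf M) -` {..x} \<inter> space lborel_01 = {0<..<1} \<inter> {..cdf M x}"
      using quantile_le_iff by (auto simp: space_restrict_space)
    also have "measure lborel_01 ({0<..<1} \<inter> {..cdf M x}) = measure lborel ({0<..<1} \<inter> {..cdf M x})"
      by (rule measure_restrict_space) auto
    also have "\<dots> = cdf M x"
    proof (cases "cdf M x < 1")
      case True
      then have "{0<..<1} \<inter> {..cdf M x} = {0<..cdf M x}" by auto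
      then show ?thesis using cdf_nonneg[of x] by simp
    next
      case False
      then have "cdf M x = 1" using cdf_bounded_prob[of x] by simp
      moreover have "{0<..<1} \<inter> {..1} = {0<..<1::real}" by auto
      ultimately show ?thesis by simp
    qed
    finally show "cdf (distr lborel_01 borel (quantile (cdf M))) x = cdf M x" .
  qed
qed (rule real_distribution_axioms)

end

lemma orlicz_heart_quantile:
  assumes Y: "Young_fun \<Phi>" and "prob_space M" and H: "orlicz_heart \<Phi> M X"
  shows "orlicz_heart \<Phi> lborel_01 (quantile (cdf (distr M borel X)))"
proof -
  have [measurable]: "X \<in> borel_measurable M" using H by (simp add: orlicz_heart_def)
  interpret real_distribution "distr M borel X"
    using assms(2) by (intro prob_space.real_distribution_distr) auto
  have "integrable lborel_01 (\<lambda>u. young_conj \<Phi> (c * \<bar>quantile (cdf (distr M borel X)) u\<bar>))"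
    if "c > 0" for c
  proof -
    have "integrable (distr M borel X) (\<lambda>x. young_conj \<Phi> (c * \<bar>x\<bar>))"
      using H that Y by (subst integrable_distr_eq) (auto simp: orlicz_heart_def)
    then show ?thesis
      using Y by (subst (asm) distr_quantile_lborel_01[symmetric]) (simp add: integrable_distr_eq)
  qed
  then show ?thesis by (simp add: orlicz_heart_def)
qed

section \<open>The objective for a random variable in the Orlicz heart\<close>

definition conj_objective :: "(real \<Rightarrow> ereal) \<Rightarrow> 'a measure \<Rightarrow> ('a \<Rightarrow> real) \<Rightarrow> real \<Rightarrow> real" where
  "conj_objective \<Phi> M f z = (\<integral>u. young_conj \<Phi> (f u + z) \<partial>M) - z"

locale orlicz_heart_rv = prob_space +
  fixes \<Phi> :: "real \<Rightarrow> ereal" and f :: "'a \<Rightarrow> real"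
  assumes Young: "Young_fun \<Phi>" and heart: "orlicz_heart \<Phi> M f"
begin

abbreviation "g \<equiv> young_conj \<Phi>"

lemma measurable_rv [measurable]: "f \<in> borel_measurable M"
  using heart by (simp add: orlicz_heart_def)

lemma measurable_conj [measurable]: "g \<in> borel_measurable borel"
  using borel_measurable_young_conj[OF Young] .

lemma integrable_conj_scaled: "c > 0 \<Longrightarrow> integrable M (\<lambda>u. g (c * \<bar>f u\<bar>))"
  using heart by (simp add: orlicz_heart_def)

lemma integrable_conj_shift: "integrable M (\<lambda>u. g (f u + z))"
proof -
  obtain c where c: "\<And>y. c \<le> g y" using young_conj_bounded_below[OF Young] by blast
  let ?w = "\<lambda>u. \<bar>c\<bar> + \<bar>g (2 * \<bar>f u\<bar>)\<bar> + \<bar>g (2 * \<bar>z\<bar>)\<bar>"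
  have upper: "g (f u + z) \<le> (g (2 * \<bar>f u\<bar>) + g (2 * \<bar>z\<bar>)) / 2" for u
  proof -
    have "g (f u + z) \<le> g (\<bar>f u\<bar> + \<bar>z\<bar>)"
      by (intro monoD[OF mono_young_conj[OF Young]] add_mono abs_ge_self)
    also have "\<dots> = g ((1 - 1/2) *\<^sub>R (2 * \<bar>f u\<bar>) + (1/2) *\<^sub>R (2 * \<bar>z\<bar>))"
      by simp
    also have "\<dots> \<le> (1 - 1/2) * g (2 * \<bar>f u\<bar>) + (1/2) * g (2 * \<bar>z\<bar>)"
      by (rule convex_onD[OF convex_on_young_conj[OF Young]]) auto
    finally show ?thesis by simp
  qed
  have abs_bound: "\<bar>v\<bar> \<le> \<bar>c\<bar> + \<bar>A\<bar> + \<bar>B\<bar>" if "c \<le> v" "v \<le> (A + B) / 2" for v A B :: real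
    using that by (auto simp: abs_le_iff)
  have bound: "norm (g (f u + z)) \<le> norm (?w u)" for u
    using abs_bound[OF c upper] by simp
  have "integrable M ?w"
    using integrable_conj_scaled[of 2] by auto
  then show ?thesis
    by (rule Bochner_Integration.integrable_bound) (measurable, rule AE_I2[OF bound])
qed

lemma integrable_rv: "integrable M f"
proof -
  obtain a b where a: "a > 1" and b: "\<And>y. a * y - b \<le> g y"
    using young_conj_superlinear[OF Young] by blast
  have bound: "norm (f u) \<le> norm (g (1 * \<bar>f u\<bar>) + b)" for u
    using b[of "\<bar>f u\<bar>"] a mult_right_mono[of 1 a "\<bar>f u\<bar>"] by simp
  have "integrable M (\<lambda>u. g (1 * \<bar>f u\<bar>) + b)"
    using integrable_conj_scaled[of 1] by simp
  then show ?thesis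
    by (rule Bochner_Integration.integrable_bound) (measurable, rule AE_I2[OF bound])
qed

lemma convex_on_conj_objective: "convex_on UNIV (conj_objective \<Phi> M f)"
  unfolding conj_objective_def[abs_def]
  by (intro convex_on_diff convex_on_integral_shift convex_on_young_conj[OF Young]
      integrable_conj_shift) (simp add: concave_on_ident)

lemma conj_objective_at_infinity: "filterlim (conj_objective \<Phi> M f) at_top at_infinity"
proof -
  obtain c where c: "\<And>y. c \<le> g y" using young_conj_bounded_below[OF Young] by blast
  obtain a b where a: "a > 1" and b: "\<And>y. a * y - b \<le> g y"
    using young_conj_superlinear[OF Young] by blast
  have below_bot: "c + - z \<le> conj_objective \<Phi> M f z" for z
  proof -
    have "(\<integral>u. c \<partial>M) \<le> (\<integral>u. g (f u + z) \<partial>M)"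
      by (intro integral_mono integrable_conj_shift c) simp
    then show ?thesis by (simp add: conj_objective_def prob_space)
  qed
  have below_top: "(a * expectation f - b) + (a - 1) * z \<le> conj_objective \<Phi> M f z" for z
  proof -
    have "a * f u + (a * z - b) \<le> g (f u + z)" for u
      using b[of "f u + z"] by (simp add: distrib_left)
    then have "(\<integral>u. a * f u + (a * z - b) \<partial>M) \<le> (\<integral>u. g (f u + z) \<partial>M)"
      using integrable_rv by (intro integral_mono integrable_conj_shift) auto
    moreover have "(\<integral>u. a * f u + (a * z - b) \<partial>M) = a * expectation f + (a * z - b)"
      using integrable_rv by (simp add: prob_space)
    ultimately show ?thesis by (simp add: conj_objective_def left_diff_distrib)
  qed
  have "filterlim (\<lambda>z. c + - z) at_top at_bot"
    by (intro filterlim_tendsto_add_at_top[OF tendsto_const] filterlim_uminus_at_top_at_bot)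
  then have "filterlim (conj_objective \<Phi> M f) at_top at_bot"
    by (rule filterlim_at_top_mono) (use below_bot in \<open>simp add: always_eventually\<close>)
  moreover have "filterlim (\<lambda>z. (a * expectation f - b) + (a - 1) * z) at_top at_top"
    using a by (intro filterlim_tendsto_add_at_top[OF tendsto_const]
        filterlim_tendsto_pos_mult_at_top[OF tendsto_const _ filterlim_ident]) auto
  then have "filterlim (conj_objective \<Phi> M f) at_top at_top"
    by (rule filterlim_at_top_mono) (use below_top in \<open>simp add: always_eventually\<close>)
  ultimately show ?thesis
    unfolding at_infinity_eq_at_top_bot by (intro filterlim_sup)
qed

lemma conj_objective_minimizers:
  "\<exists>a b. a \<le> b \<and> {x. \<forall>y. conj_objective \<Phi> M f x \<le> conj_objective \<Phi> M f y} = {a..b}"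
  by (rule convex_on_minimizers_Icc[OF convex_on_conj_objective conj_objective_at_infinity])

lemma conj_objective_one_sided_derivatives:
  "((\<lambda>h. (conj_objective \<Phi> M f (x + h) - conj_objective \<Phi> M f x) / h)
      \<longlongrightarrow> (\<integral>u. rderiv g (f u + x) \<partial>M) - 1) (at_right 0)"
  "((\<lambda>h. (conj_objective \<Phi> M f (x + h) - conj_objective \<Phi> M f x) / h)
      \<longlongrightarrow> (\<integral>u. lderiv g (f u + x) \<partial>M) - 1) (at_left 0)"
proof -
  let ?G = "\<lambda>z. \<integral>u. g (f u + z) \<partial>M"
  note slopes = tendsto_integral_shift_slopes[OF convex_on_young_conj[OF Young] measurable_rv
      integrable_conj_shift, of x]
  have quot: "(?G (x + h) - ?G x) / h - 1
      = (conj_objective \<Phi> M f (x + h) - conj_objective \<Phi> M f x) / h" if "h \<noteq> 0" for h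
  proof -
    have diff: "(A - B) / h - 1 = ((A - (x + h)) - (B - x)) / h" for A B :: real
      using that by (simp add: field_simps)
    show ?thesis unfolding conj_objective_def by (rule diff)
  qed
  have ev: "\<forall>\<^sub>F h in at 0 within S. (?G (x + h) - ?G x) / h - 1
      = (conj_objective \<Phi> M f (x + h) - conj_objective \<Phi> M f x) / h" for S
    by (rule eventually_mono[OF eventually_neq_at_within quot])
  show "((\<lambda>h. (conj_objective \<Phi> M f (x + h) - conj_objective \<Phi> M f x) / h)
      \<longlongrightarrow> (\<integral>u. rderiv g (f u + x) \<partial>M) - 1) (at_right 0)"
    by (rule Lim_transform_eventually[OF tendsto_diff[OF slopes(1) tendsto_const] ev])
  show "((\<lambda>h. (conj_objective \<Phi> M f (x + h) - conj_objective \<Phi> M f x) / h)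
      \<longlongrightarrow> (\<integral>u. lderiv g (f u + x) \<partial>M) - 1) (at_left 0)"
    by (rule Lim_transform_eventually[OF tendsto_diff[OF slopes(2) tendsto_const] ev])
qed

end

theorem propositionA1:
  fixes \<Phi> :: "real \<Rightarrow> ereal" and M :: "'a measure" and X :: "'a \<Rightarrow> real"
  assumes "Young_fun \<Phi>"
    and "prob_space M" and "atomless M"
    and "orlicz_heart \<Phi> M X"
    and F_def: "F = cdf (distr M borel X)"
  shows "convex_on UNIV (varphi \<Phi> F)
    \<and> (\<exists>a b. a \<le> b \<and> {x. \<forall>y. varphi \<Phi> F x \<le> varphi \<Phi> F y} = {a..b})
    \<and> (\<forall>x. ((\<lambda>h. (varphi \<Phi> F (x + h) - varphi \<Phi> F x) / h)
              \<longlongrightarrow> (LINT u:{0<..<1}|lborel. lderiv (young_conj \<Phi>) (quantile F u + x)) - 1) (at_left 0)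
          \<and> ((\<lambda>h. (varphi \<Phi> F (x + h) - varphi \<Phi> F x) / h)
              \<longlongrightarrow> (LINT u:{0<..<1}|lborel. rderiv (young_conj \<Phi>) (quantile F u + x)) - 1) (at_right 0))"
proof -
  interpret orlicz_heart_rv lborel_01 \<Phi> "quantile F"
    unfolding F_def using prob_space_lborel_01 orlicz_heart_quantile[OF assms(1,2,4)] assms(1)
    by (intro orlicz_heart_rv.intro orlicz_heart_rv_axioms.intro)
  have "varphi \<Phi> F = conj_objective \<Phi> lborel_01 (quantile F)"
    by (simp add: fun_eq_iff varphi_def conj_objective_def set_integral_eq_lborel_01)
  then show ?thesis
    using convex_on_conj_objective conj_objective_minimizers conj_objective_one_sided_derivatives
    by (simp add: set_integral_eq_lborel_01)
qed

end
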